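(* Consider the series $H_{a_1,\dots,a_r}(z)$ for all $r\ge1$ and all tuples $(a_1,\dots,a_r)$ of positive integers none of which is divisible by $3$. These series (for pairwise distinct tuples), together with the constant series $1$, are linearly independent over $(\mathbb Z/3\mathbb Z)[z]$; consequently they are also linearly independent over $(\mathbb Z/3^\gamma\mathbb Z)[z]$ for every positive integer $\gamma$, and over $\mathbb Z[z]$. That is, if $p_0(z)+\sum_{i=1}^N p_i(z)H_{a^{(i)}}(z)=0$ (over the respective coefficient ring) with pairwise distinct such tuples $a^{(i)}$, then all polynomials $p_i$ are zero.
   Context: For positive integers $a_1,\dots,a_r$, $H_{a_1,\dots,a_r}(z)=\sum_{n_1>n_2>\dots>n_r\ge0}z^{a_13^{n_1}+a_23^{n_2}+\dots+a_r3^{n_r}}$. *)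

theory Defs
  imports "HOL-Computational_Algebra.Polynomial_FPS"
begin

text \<open>Index tuples (n_1,...,n_r) with n_1 > n_2 > ... > n_r \<ge> 0 contributing
  z^(a_1 3^n_1 + ... + a_r 3^n_r) to H_a(z); the coefficient of z^m is the number
  of such tuples with exponent m.\<close>

definition H_coeff :: "nat list \<Rightarrow> nat \<Rightarrow> nat" where
  "H_coeff a m = card {ns :: nat list. length ns = length a \<and> sorted_wrt (>) ns \<and>
      (\<Sum>i<length a. a ! i * 3 ^ (ns ! i)) = m}"

definition H :: "nat list \<Rightarrow> int fps" where
  "H a = Abs_fps (\<lambda>m. int (H_coeff a m))"

definition admissible :: "nat list \<Rightarrow> bool" where
  "admissible a \<longleftrightarrow> a \<noteq> [] \<and> (\<forall>x\<in>set a. 0 < x \<and> \<not> 3 dvd x)"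

end

theory Submission
  imports Defs "HOL-Library.Numeral_Type"
begin

(* Splitting by whether the smallest exponent n_r is 0 gives, for a = u @ [x],
   H_a(z) = H_a(z^3) + z^x H_u(z^3).  Hence the 3-sections of a polynomial relation
   \<Sum> q_t H_t = 0 are again polynomial relations among the same series, over any commutative
   ring.  For the longest tuples t with q_t \<noteq> 0, repeated 0-sections shrink the degree of q_t,
   so these coefficients may be assumed constant.  If such a constant c = q_(u @ [x]) is
   nonzero, the section at x mod 3 \<noteq> 0 is a relation of smaller length whose coefficient of
   H_u has z^(x div 3)-coefficient (q_u)_x + c, so (q_u)_x \<noteq> 0 by induction on the length;
   the 0-section keeps c and replaces q_u by its coefficients at multiples of 3, and the
   resulting descent on the degree of q_u is impossible.  Coefficients in Z/3^\<gamma> are handled by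
   dividing out one factor 3 at a time. *)

unbundle fps_syntax

definition fps_dilate :: "nat \<Rightarrow> 'a::comm_ring_1 fps \<Rightarrow> 'a fps" where
  "fps_dilate b f = Abs_fps (\<lambda>m. if b dvd m then f $ (m div b) else 0)"

(* f = (\<Sum>j<b. fps_X ^ j * fps_dilate b (fps_section b j f)) *)
definition fps_section :: "nat \<Rightarrow> nat \<Rightarrow> 'a::comm_ring_1 fps \<Rightarrow> 'a fps" where
  "fps_section b j f = Abs_fps (\<lambda>m. f $ (b * m + j))"

lemma fps_section_nth [simp]: "fps_section b j f $ m = f $ (b * m + j)"
  by (simp add: fps_section_def)

lemma fps_dilate_nth: "fps_dilate b f $ m = (if b dvd m then f $ (m div b) else 0)"
  by (simp add: fps_dilate_def)

lemma fps_section_add: "fps_section b j (f + g) = fps_section b j f + fps_section b j g"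
  by (simp add: fps_eq_iff)

lemma fps_section_sum: "fps_section b j (\<Sum>x\<in>S. f x) = (\<Sum>x\<in>S. fps_section b j (f x))"
  by (simp add: fps_eq_iff fps_sum_nth)

lemma fps_section_0 [simp]: "fps_section b j 0 = 0"
  by (simp add: fps_eq_iff)

lemma fps_section_const:
  "0 < b \<Longrightarrow> fps_section b j (fps_const c) = (if j = 0 then fps_const c else 0)"
  by (auto simp: fps_eq_iff)

lemma fps_section_dilate_mult:
  assumes "j < b"
  shows "fps_section b j (fps_dilate b g * h) = g * fps_section b j h"
proof (rule fps_ext)
  fix m
  have "fps_section b j (fps_dilate b g * h) $ m =
      (\<Sum>i=0..b*m+j. fps_dilate b g $ i * h $ (b*m+j-i))"
    by (simp add: fps_mult_nth)
  also have "\<dots> = (\<Sum>i\<in>(\<lambda>i. b*i) ` {0..m}. fps_dilate b g $ i * h $ (b*m+j-i))"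
  proof (rule sum.mono_neutral_right)
    show "\<forall>i\<in>{0..b*m+j} - (\<lambda>i. b*i) ` {0..m}. fps_dilate b g $ i * h $ (b*m+j-i) = 0"
    proof
      fix i assume i: "i \<in> {0..b*m+j} - (\<lambda>i. b*i) ` {0..m}"
      show "fps_dilate b g $ i * h $ (b*m+j-i) = 0"
      proof (cases "b dvd i")
        case True
        then obtain k where k: "i = b*k" by blast
        with i assms have "b * k < b * Suc m"
          by auto
        then have "k \<le> m"
          by (metis mult_less_cancel1 less_Suc_eq_le)
        with k i show ?thesis by auto
      qed (simp add: fps_dilate_nth)
    qed
  qed (auto intro!: trans_le_add1 mult_le_mono2)
  also have "\<dots> = (\<Sum>i=0..m. fps_dilate b g $ (b*i) * h $ (b*m+j-b*i))"
    using assms by (subst sum.reindex) (auto simp: inj_on_def)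
  also have "\<dots> = (\<Sum>i=0..m. g $ i * fps_section b j h $ (m-i))"
    using assms by (intro sum.cong) (auto simp: fps_dilate_nth diff_mult_distrib2)
  also have "\<dots> = (g * fps_section b j h) $ m"
    by (simp add: fps_mult_nth)
  finally show "fps_section b j (fps_dilate b g * h) $ m = (g * fps_section b j h) $ m" .
qed

lemma fps_eq_0_if_sections_eq_0:
  assumes "0 < b" and "\<And>j. j < b \<Longrightarrow> fps_section b j f = 0"
  shows "f = 0"
proof (rule fps_ext)
  fix m
  have "f $ m = fps_section b (m mod b) f $ (m div b)"
    by simp
  also have "\<dots> = 0"
    using assms by simp
  finally show "f $ m = 0 $ m"
    by simp
qed

definition fps_is_poly :: "'a::zero fps \<Rightarrow> bool" where
  "fps_is_poly f \<longleftrightarrow> (\<forall>\<^sub>F m in sequentially. f $ m = 0)"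

lemma fps_is_poly_iff: "fps_is_poly f \<longleftrightarrow> (\<exists>K. \<forall>m>K. f $ m = 0)"
  unfolding fps_is_poly_def eventually_sequentially
  by (metis Suc_le_eq less_imp_le)

lemma fps_is_poly_0 [simp]: "fps_is_poly 0"
  by (simp add: fps_is_poly_def)

lemma fps_is_poly_add:
  fixes f g :: "'a::monoid_add fps"
  shows "fps_is_poly f \<Longrightarrow> fps_is_poly g \<Longrightarrow> fps_is_poly (f + g)"
  unfolding fps_is_poly_def fps_add_nth by (erule (1) eventually_elim2) simp

lemma fps_is_poly_sum:
  fixes f :: "'b \<Rightarrow> 'a::comm_monoid_add fps"
  shows "(\<And>x. x \<in> S \<Longrightarrow> fps_is_poly (f x)) \<Longrightarrow> fps_is_poly (\<Sum>x\<in>S. f x)"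
  by (induction S rule: infinite_finite_induct) (auto intro: fps_is_poly_add)

lemma fps_is_poly_section:
  assumes "0 < b" and "fps_is_poly f"
  shows "fps_is_poly (fps_section b j f)"
proof -
  from assms(2) obtain K where K: "\<And>m. m \<ge> K \<Longrightarrow> f $ m = 0"
    by (auto simp: fps_is_poly_def eventually_sequentially)
  have "b * m + j \<ge> K" if "m \<ge> K" for m
  proof -
    have "m \<le> b * m"
      using assms(1) by simp
    with that show ?thesis
      by linarith
  qed
  then show ?thesis
    unfolding fps_is_poly_def eventually_sequentially by (auto intro: K)
qed

lemma fps_is_poly_mult_X_power:
  assumes "fps_is_poly f"
  shows "fps_is_poly (f * fps_X ^ x)"
proof -
  from assms obtain K where K: "\<And>m. m \<ge> K \<Longrightarrow> f $ m = 0"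
    by (auto simp: fps_is_poly_def eventually_sequentially)
  show ?thesis
    unfolding fps_is_poly_def eventually_sequentially fps_X_power_mult_right_nth
    by (intro exI[of _ "K + x"]) (auto intro: K)
qed

lemma fps_is_poly_fps_of_poly: "fps_is_poly (fps_of_poly p)"
  unfolding fps_is_poly_def eventually_sequentially
  by (intro exI[of _ "Suc (degree p)"]) (auto intro: coeff_eq_0)

definition exponent_weight :: "nat list \<Rightarrow> nat list \<Rightarrow> nat" where
  "exponent_weight t ns = (\<Sum>i<length t. t ! i * 3 ^ (ns ! i))"

definition exponent_tuples :: "nat list \<Rightarrow> nat \<Rightarrow> nat list set" where
  "exponent_tuples t m =
     {ns. length ns = length t \<and> sorted_wrt (>) ns \<and> exponent_weight t ns = m}"

lemma H_coeff_eq_card: "H_coeff t m = card (exponent_tuples t m)"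
  by (simp add: H_coeff_def exponent_tuples_def exponent_weight_def)

lemma exponent_weight_snoc:
  assumes "length ns = length u"
  shows "exponent_weight (u @ [x]) (ns @ [n]) = exponent_weight u ns + x * 3 ^ n"
  using assms by (simp add: exponent_weight_def nth_append)

lemma exponent_weight_map_Suc:
  assumes "length ns = length t"
  shows "exponent_weight t (map Suc ns) = 3 * exponent_weight t ns"
  using assms unfolding exponent_weight_def sum_distrib_left by (intro sum.cong) auto

lemma exponent_tuples_le:
  assumes "\<forall>y\<in>set t. 0 < y" and "ns \<in> exponent_tuples t m" and "n \<in> set ns"
  shows "n \<le> m"
proof -
  from assms(2) have len: "length ns = length t" and m: "exponent_weight t ns = m"
    by (auto simp: exponent_tuples_def)
  from assms(3) obtain i where i: "i < length ns" "ns ! i = n"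
    by (auto simp: in_set_conv_nth)
  have "t ! i * 3 ^ (ns ! i) \<le> exponent_weight t ns"
    unfolding exponent_weight_def using i len by (intro member_le_sum) auto
  then have "t ! i * 3 ^ n \<le> m"
    using i m by simp
  moreover have "n < 3 ^ n"
    by (rule less_exp[THEN less_le_trans]) (simp add: power_mono)
  moreover have "3 ^ n \<le> t ! i * 3 ^ n"
    using assms(1) i len by (simp add: Suc_le_eq)
  ultimately show ?thesis
    by linarith
qed

lemma finite_exponent_tuples:
  assumes "\<forall>y\<in>set t. 0 < y"
  shows "finite (exponent_tuples t m)"
proof (rule finite_subset)
  show "exponent_tuples t m \<subseteq> {ns. set ns \<subseteq> {..m} \<and> length ns = length t}"
    using exponent_tuples_le[OF assms] by (auto simp: exponent_tuples_def)
qed (simp add: finite_lists_length_eq)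

lemma map_SucE:
  assumes "0 \<notin> set ns"
  obtains ms where "ns = map Suc ms" and "length ms = length ns"
proof
  show "ns = map Suc (map (\<lambda>y. y - 1) ns)"
    using assms by (induction ns) auto
qed simp

lemma exponent_tuples_without_0:
  "{ns \<in> exponent_tuples t m. 0 \<notin> set ns} =
     map Suc ` (if 3 dvd m then exponent_tuples t (m div 3) else {})"
proof (intro equalityI subsetI)
  fix ns assume ns: "ns \<in> {ns \<in> exponent_tuples t m. 0 \<notin> set ns}"
  then obtain ms where "ns = map Suc ms" and "length ms = length t"
    by (metis (mono_tags, lifting) exponent_tuples_def mem_Collect_eq map_SucE)
  then show "ns \<in> map Suc ` (if 3 dvd m then exponent_tuples t (m div 3) else {})"
    using ns by (auto simp: exponent_tuples_def exponent_weight_map_Suc sorted_wrt_map)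
next
  fix ns assume "ns \<in> map Suc ` (if 3 dvd m then exponent_tuples t (m div 3) else {})"
  then show "ns \<in> {ns \<in> exponent_tuples t m. 0 \<notin> set ns}"
    by (auto simp: exponent_tuples_def exponent_weight_map_Suc sorted_wrt_map split: if_splits)
qed

lemma exponent_tuples_with_0:
  "{ns \<in> exponent_tuples (u @ [x]) m. 0 \<in> set ns} =
     (\<lambda>ns. map Suc ns @ [0]) `
       (if x \<le> m \<and> 3 dvd (m - x) then exponent_tuples u ((m - x) div 3) else {})"
proof (intro equalityI subsetI)
  fix ns assume ns: "ns \<in> {ns \<in> exponent_tuples (u @ [x]) m. 0 \<in> set ns}"
  then obtain ns0 n where ns0: "ns = ns0 @ [n]" "length ns0 = length u"
    by (auto simp: exponent_tuples_def length_Suc_conv_rev)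
  with ns have "n = 0" and "\<forall>y\<in>set ns0. 0 < y" and sorted: "sorted_wrt (>) ns0"
    by (auto simp: exponent_tuples_def sorted_wrt_append)
  then obtain ms where ms: "ns0 = map Suc ms" and len: "length ms = length u"
    using ns0(2) by (metis map_SucE less_irrefl)
  have "exponent_weight (u @ [x]) ns = 3 * exponent_weight u ms + x"
    using ns0 ms len \<open>n = 0\<close> by (simp add: exponent_weight_snoc exponent_weight_map_Suc)
  then have "m = 3 * exponent_weight u ms + x"
    using ns by (simp add: exponent_tuples_def)
  moreover have "sorted_wrt (>) ms"
    using sorted ms by (simp add: sorted_wrt_map)
  ultimately have "ms \<in> exponent_tuples u ((m - x) div 3)" and "x \<le> m" and "3 dvd (m - x)"
    using len by (auto simp: exponent_tuples_def)
  then show "ns \<in> (\<lambda>ns. map Suc ns @ [0]) `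
      (if x \<le> m \<and> 3 dvd (m - x) then exponent_tuples u ((m - x) div 3) else {})"
    using ns0 ms \<open>n = 0\<close> by auto
next
  fix ns assume "ns \<in> (\<lambda>ns. map Suc ns @ [0]) `
      (if x \<le> m \<and> 3 dvd (m - x) then exponent_tuples u ((m - x) div 3) else {})"
  then obtain ms where ns: "ns = map Suc ms @ [0]" and "x \<le> m" "3 dvd (m - x)"
    and ms: "ms \<in> exponent_tuples u ((m - x) div 3)"
    by (auto split: if_splits)
  then have len: "length ms = length u"
    by (simp add: exponent_tuples_def)
  have "exponent_weight (u @ [x]) ns = m"
    using ns ms len \<open>x \<le> m\<close> \<open>3 dvd (m - x)\<close>
    by (simp add: exponent_weight_snoc exponent_weight_map_Suc exponent_tuples_def)
  moreover have "sorted_wrt (>) ns"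
    using ms ns by (simp add: exponent_tuples_def sorted_wrt_append sorted_wrt_map)
  ultimately show "ns \<in> {ns \<in> exponent_tuples (u @ [x]) m. 0 \<in> set ns}"
    using ns len by (simp add: exponent_tuples_def)
qed

lemma card_exponent_tuples_snoc:
  assumes "\<forall>y\<in>set (u @ [x]). 0 < y"
  shows "card (exponent_tuples (u @ [x]) m) =
    (if 3 dvd m then card (exponent_tuples (u @ [x]) (m div 3)) else 0) +
    (if x \<le> m \<and> 3 dvd (m - x) then card (exponent_tuples u ((m - x) div 3)) else 0)"
proof -
  let ?E = "exponent_tuples (u @ [x]) m"
  have split: "?E = {ns \<in> ?E. 0 \<notin> set ns} \<union> {ns \<in> ?E. 0 \<in> set ns}"
    by blast
  have "card ?E = card {ns \<in> ?E. 0 \<notin> set ns} + card {ns \<in> ?E. 0 \<in> set ns}"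
    using finite_exponent_tuples[OF assms] by (subst split) (rule card_Un_disjoint; auto)
  also have "card {ns \<in> ?E. 0 \<notin> set ns} =
      (if 3 dvd m then card (exponent_tuples (u @ [x]) (m div 3)) else 0)"
    unfolding exponent_tuples_without_0
    by (simp add: card_image inj_on_subset[OF list.inj_map[OF inj_Suc]])
  also have "card {ns \<in> ?E. 0 \<in> set ns} =
      (if x \<le> m \<and> 3 dvd (m - x) then card (exponent_tuples u ((m - x) div 3)) else 0)"
    unfolding exponent_tuples_with_0 by (simp add: card_image inj_on_def)
  finally show ?thesis .
qed

definition Hgen :: "nat list \<Rightarrow> 'a::comm_ring_1 fps" where
  "Hgen t = Abs_fps (\<lambda>m. of_nat (H_coeff t m))"

lemma H_eq_Hgen: "H = Hgen"
  by (simp add: fun_eq_iff H_def Hgen_def)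

lemma Hgen_Nil: "Hgen [] = 1"
proof -
  have "exponent_tuples [] m = (if m = 0 then {[]} else {})" for m
    by (auto simp: exponent_tuples_def exponent_weight_def)
  then show ?thesis
    by (simp add: fps_eq_iff Hgen_def H_coeff_eq_card)
qed

lemma Hgen_snoc:
  assumes "\<forall>y\<in>set (u @ [x]). 0 < y"
  shows "Hgen (u @ [x]) = fps_dilate 3 (Hgen (u @ [x])) + fps_X ^ x * fps_dilate 3 (Hgen u)"
proof (rule fps_ext)
  fix m
  show "Hgen (u @ [x]) $ m =
      (fps_dilate 3 (Hgen (u @ [x])) + fps_X ^ x * fps_dilate 3 (Hgen u)) $ m"
    unfolding Hgen_def H_coeff_eq_card fps_nth_Abs_fps card_exponent_tuples_snoc[OF assms, of m]
    by (auto simp: fps_X_power_mult_nth fps_dilate_nth H_coeff_eq_card)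
qed

locale admissible_alphabet =
  fixes A :: "nat set" and L0 :: nat
  assumes finite_A: "finite A"
    and A_pos: "\<And>x. x \<in> A \<Longrightarrow> 0 < x"
    and A_not_dvd: "\<And>x. x \<in> A \<Longrightarrow> \<not> 3 dvd x"
begin

definition words :: "nat list set" where
  "words = {t. set t \<subseteq> A \<and> length t \<le> L0}"

lemma finite_words: "finite words"
  unfolding words_def using finite_lists_length_le[OF finite_A] by simp

lemma Nil_in_words: "[] \<in> words"
  by (simp add: words_def)

lemma snoc_in_words: "u \<in> words \<Longrightarrow> length u < L0 \<Longrightarrow> x \<in> A \<Longrightarrow> u @ [x] \<in> words"
  by (auto simp: words_def)

lemma sum_words_nonempty:
  "(\<Sum>t\<in>words - {[]}. f t) =
     (\<Sum>u\<in>words. if length u < L0 then \<Sum>x\<in>A. f (u @ [x]) else 0)"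
proof -
  let ?V = "{u \<in> words. length u < L0}"
  have "bij_betw (\<lambda>(u, x). u @ [x]) (?V \<times> A) (words - {[]})"
  proof (rule bij_betwI')
    fix t assume t: "t \<in> words - {[]}"
    then have "butlast t \<in> ?V" and "last t \<in> A"
      by (cases t rule: rev_cases; auto simp: words_def)+
    then show "\<exists>p \<in> ?V \<times> A. t = (\<lambda>(u, x). u @ [x]) p"
      using t by (intro bexI[of _ "(butlast t, last t)"]) auto
  qed (auto simp: words_def)
  then have "(\<Sum>t\<in>words - {[]}. f t) = (\<Sum>(u, x)\<in>?V \<times> A. f (u @ [x]))"
    by (simp add: sum.reindex_bij_betw[symmetric] case_prod_unfold)
  also have "\<dots> = (\<Sum>u\<in>?V. \<Sum>x\<in>A. f (u @ [x]))"
    using finite_words finite_A by (simp add: sum.cartesian_product)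
  also have "\<dots> = (\<Sum>u\<in>words. if length u < L0 then \<Sum>x\<in>A. f (u @ [x]) else 0)"
    using finite_words by (simp add: sum.inter_filter)
  finally show ?thesis .
qed

(* Relations are indexed by all words over A up to length L0: this family is closed under
   taking prefixes, so sections of relations stay inside it. *)
definition combination :: "(nat list \<Rightarrow> 'a::comm_ring_1 fps) \<Rightarrow> 'a fps" where
  "combination q = (\<Sum>t\<in>words. q t * Hgen t)"

definition section_coeffs ::
    "nat \<Rightarrow> (nat list \<Rightarrow> 'a::comm_ring_1 fps) \<Rightarrow> nat list \<Rightarrow> 'a fps" where
  "section_coeffs j q u = fps_section 3 j (q u) +
     (if length u < L0 then \<Sum>x\<in>A. fps_section 3 j (q (u @ [x]) * fps_X ^ x) else 0)"

lemma section_mult_Hgen: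
  assumes "j < 3" and "t \<in> words" and "t \<noteq> []"
  shows "fps_section 3 j (f * Hgen t) =
    fps_section 3 j f * Hgen t + fps_section 3 j (f * fps_X ^ last t) * Hgen (butlast t)"
proof -
  obtain u x where t: "t = u @ [x]"
    using assms(3) by (cases t rule: rev_cases) auto
  have "\<forall>y\<in>set (u @ [x]). 0 < y"
    using assms(2) A_pos by (auto simp: words_def t)
  then have "f * Hgen t = fps_dilate 3 (Hgen t) * f + fps_dilate 3 (Hgen u) * (f * fps_X ^ x)"
    unfolding t by (subst Hgen_snoc) (simp_all add: algebra_simps)
  then have "fps_section 3 j (f * Hgen t) =
      fps_section 3 j (fps_dilate 3 (Hgen t) * f) +
      fps_section 3 j (fps_dilate 3 (Hgen u) * (f * fps_X ^ x))"
    by (simp only: fps_section_add)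
  also have "\<dots> = Hgen t * fps_section 3 j f + Hgen u * fps_section 3 j (f * fps_X ^ x)"
    using assms(1) by (simp only: fps_section_dilate_mult)
  finally show ?thesis
    by (simp add: t mult.commute)
qed

lemma section_combination:
  assumes "j < 3"
  shows "fps_section 3 j (combination q) = combination (section_coeffs j q)"
proof -
  let ?child = "\<lambda>t. fps_section 3 j (q t * fps_X ^ last t) * Hgen (butlast t)"
  have "fps_section 3 j (combination q) = (\<Sum>t\<in>words. fps_section 3 j (q t * Hgen t))"
    by (simp add: combination_def fps_section_sum)
  also have "\<dots> = (\<Sum>t\<in>words. fps_section 3 j (q t) * Hgen t) + (\<Sum>t\<in>words - {[]}. ?child t)"
  proof -
    have "(\<Sum>t\<in>words. fps_section 3 j (q t * Hgen t)) =
        (\<Sum>t\<in>words. fps_section 3 j (q t) * Hgen t + (if t = [] then 0 else ?child t))"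
      using assms by (intro sum.cong) (auto simp: section_mult_Hgen Hgen_Nil)
    also have "\<dots> = (\<Sum>t\<in>words. fps_section 3 j (q t) * Hgen t) + (\<Sum>t\<in>words - {[]}. ?child t)"
      using finite_words by (simp add: sum.distrib sum.If_cases Diff_eq)
    finally show ?thesis .
  qed
  also have "(\<Sum>t\<in>words - {[]}. ?child t) =
      (\<Sum>u\<in>words. (if length u < L0 then \<Sum>x\<in>A. fps_section 3 j (q (u @ [x]) * fps_X ^ x) else 0)
         * Hgen u)"
    by (simp add: sum_words_nonempty sum_distrib_right if_distrib[of "\<lambda>z. z * _"] cong: if_cong)
  finally show ?thesis
    by (simp add: combination_def section_coeffs_def distrib_right sum.distrib)
qed

definition is_relation :: "(nat list \<Rightarrow> 'a::comm_ring_1 fps) \<Rightarrow> bool" where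
  "is_relation q \<longleftrightarrow> combination q = 0 \<and> (\<forall>t\<in>words. fps_is_poly (q t))"

definition height_le :: "nat \<Rightarrow> (nat list \<Rightarrow> 'a::zero fps) \<Rightarrow> bool" where
  "height_le L q \<longleftrightarrow> (\<forall>t\<in>words. L < length t \<longrightarrow> q t = 0)"

definition top_const :: "nat \<Rightarrow> (nat list \<Rightarrow> 'a::zero fps) \<Rightarrow> bool" where
  "top_const L q \<longleftrightarrow> (\<forall>t\<in>words. length t = L \<longrightarrow> q t = fps_const (q t $ 0))"

lemma is_relation_section_coeffs:
  assumes "is_relation q" and "j < 3"
  shows "is_relation (section_coeffs j q)"
proof -
  have "combination (section_coeffs j q) = 0"
    using assms section_combination[of j q] by (simp add: is_relation_def)
  moreover have "fps_is_poly (section_coeffs j q u)" if "u \<in> words" for u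
    using assms that snoc_in_words unfolding section_coeffs_def is_relation_def
    by (auto intro!: fps_is_poly_add fps_is_poly_section fps_is_poly_sum fps_is_poly_mult_X_power)
  ultimately show ?thesis
    by (simp add: is_relation_def)
qed

lemma section_coeffs_top:
  assumes "height_le L q" and "u \<in> words" and "L \<le> length u"
  shows "section_coeffs j q u = fps_section 3 j (q u)"
  using assms snoc_in_words by (auto simp: section_coeffs_def height_le_def)

lemma height_le_section_coeffs: "height_le L q \<Longrightarrow> height_le L (section_coeffs j q)"
  by (auto simp: height_le_def section_coeffs_top)

lemma relation_height_0:
  assumes "is_relation q" and "height_le 0 q"
  shows "\<forall>t\<in>words. q t = 0"
proof -
  have "combination q = (\<Sum>t\<in>words. if t = [] then q [] else 0)"
    unfolding combination_def using assms(2)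
    by (intro sum.cong) (auto simp: height_le_def Hgen_Nil)
  then have "q [] = 0"
    using assms(1) finite_words Nil_in_words by (simp add: is_relation_def)
  then show ?thesis
    using assms(2) by (auto simp: height_le_def)
qed

lemma section_coeffs_nth_below_top:
  assumes "top_const (Suc L) q" and "u \<in> words" and "length u = L" and "L < L0"
  shows "section_coeffs j q u $ m =
    q u $ (3 * m + j) + (if 3 * m + j \<in> A then q (u @ [3 * m + j]) $ 0 else 0)"
proof -
  have "(q (u @ [x]) * fps_X ^ x) $ (3 * m + j) = (if x = 3 * m + j then q (u @ [x]) $ 0 else 0)"
    if "x \<in> A" for x
    using assms that snoc_in_words[of u x]
    by (subst top_const_def[THEN iffD1, OF assms(1), rule_format])
      (auto simp: fps_X_power_mult_right_nth)
  then show ?thesis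
    using assms finite_A by (simp add: section_coeffs_def fps_sum_nth sum.delta' cong: sum.cong)
qed

lemma section_coeffs_0_top:
  assumes "height_le L q" and "top_const L q" and "t \<in> words" and "length t = L"
  shows "section_coeffs 0 q t = q t"
proof -
  have "q t = fps_const (q t $ 0)"
    using assms by (simp add: top_const_def)
  moreover have "section_coeffs 0 q t = fps_section 3 0 (q t)"
    using assms by (simp add: section_coeffs_top)
  ultimately show ?thesis
    by (metis fps_section_const zero_less_numeral)
qed

lemma top_const_section_coeffs_0:
  "height_le L q \<Longrightarrow> top_const L q \<Longrightarrow> top_const L (section_coeffs 0 q)"
  by (auto simp: top_const_def section_coeffs_0_top)

lemma height_le_section_coeffs_residue:
  assumes "0 < j" "j < 3" and "height_le (Suc L) q" and "top_const (Suc L) q"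
  shows "height_le L (section_coeffs j q)"
  unfolding height_le_def
proof (intro ballI impI)
  fix t assume t: "t \<in> words" "L < length t"
  then have "section_coeffs j q t = fps_section 3 j (q t)"
    using assms(3) by (simp add: section_coeffs_top)
  moreover have "q t = fps_const (q t $ 0)"
    using t assms(3,4) by (cases "length t = Suc L") (auto simp: top_const_def height_le_def)
  ultimately show "section_coeffs j q t = 0"
    using assms(1,2) by (metis fps_section_const not_gr_zero zero_less_numeral)
qed

lemma top_const_nonzero_impossible:
  fixes q :: "nat list \<Rightarrow> 'a::comm_ring_1 fps"
  assumes IH: "\<And>q :: nat list \<Rightarrow> 'a fps. is_relation q \<Longrightarrow> height_le L q \<Longrightarrow> \<forall>t\<in>words. q t = 0"
    and u: "u \<in> words" "length u = L" "L < L0" and x0: "x0 \<in> A"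
  shows "is_relation q \<Longrightarrow> height_le (Suc L) q \<Longrightarrow> top_const (Suc L) q \<Longrightarrow>
    q (u @ [x0]) $ 0 \<noteq> 0 \<Longrightarrow> \<forall>m>K. q u $ m = 0 \<Longrightarrow> False"
proof (induction K arbitrary: q rule: less_induct)
  case (less K q)
  define j where "j = x0 mod 3"
  have j: "0 < j" "j < 3"
    using A_not_dvd[OF x0] by (auto simp: j_def dvd_eq_mod_eq_0)
  have "section_coeffs j q u = 0"
    using IH[OF is_relation_section_coeffs[OF less.prems(1) j(2)]
        height_le_section_coeffs_residue[OF j less.prems(2,3)]] u(1) by blast
  moreover have "section_coeffs j q u $ (x0 div 3) = q u $ x0 + q (u @ [x0]) $ 0"
    using section_coeffs_nth_below_top[OF less.prems(3) u, of j "x0 div 3"] x0 by (simp add: j_def)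
  ultimately have "q u $ x0 \<noteq> 0"
    using less.prems(4) by auto
  then have "x0 \<le> K"
    using less.prems(5) not_le by blast
  then have "K div 3 < K"
    using A_pos[OF x0] by simp
  moreover have "\<forall>m > K div 3. section_coeffs 0 q u $ m = 0"
  proof (intro allI impI)
    fix m assume "K div 3 < m"
    then have "q u $ (3 * m) = 0"
      using less.prems(5) by simp
    moreover have "3 * m \<notin> A"
      using A_not_dvd by (metis dvd_triv_left)
    ultimately show "section_coeffs 0 q u $ m = 0"
      using section_coeffs_nth_below_top[OF less.prems(3) u, of 0 m] by simp
  qed
  moreover have "section_coeffs 0 q (u @ [x0]) = q (u @ [x0])"
    using less.prems(2,3) snoc_in_words[OF u(1) _ x0] u by (simp add: section_coeffs_0_top)
  ultimately show False
    using less.IH[of "K div 3" "section_coeffs 0 q"] less.prems(1-4)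
    by (simp add: is_relation_section_coeffs height_le_section_coeffs top_const_section_coeffs_0)
qed

lemma top_coeffs_zero_if_top_const:
  fixes q :: "nat list \<Rightarrow> 'a::comm_ring_1 fps"
  assumes IH: "\<And>q :: nat list \<Rightarrow> 'a fps. is_relation q \<Longrightarrow> height_le L q \<Longrightarrow> \<forall>t\<in>words. q t = 0"
    and q: "is_relation q" "height_le (Suc L) q" "top_const (Suc L) q"
  shows "\<forall>t\<in>words. length t = Suc L \<longrightarrow> q t = 0"
proof (intro ballI impI)
  fix t assume t: "t \<in> words" "length t = Suc L"
  then obtain u x0 where ux0: "t = u @ [x0]"
    by (cases t rule: rev_cases) auto
  with t have u: "u \<in> words" "length u = L" "L < L0" and x0: "x0 \<in> A"
    by (auto simp: words_def)
  obtain K where "\<forall>m>K. q u $ m = 0"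
    using q(1) u(1) by (auto simp: is_relation_def fps_is_poly_iff)
  then have "q t $ 0 = 0"
    using top_const_nonzero_impossible[OF IH u x0 q] ux0 by blast
  then show "q t = 0"
    using q(3) t by (metis top_const_def fps_const_0_eq_0)
qed

lemma top_coeffs_zero_by_degree:
  fixes q :: "nat list \<Rightarrow> 'a::comm_ring_1 fps"
  assumes const_case: "\<And>q :: nat list \<Rightarrow> 'a fps. is_relation q \<Longrightarrow> height_le L q \<Longrightarrow>
      top_const L q \<Longrightarrow> \<forall>t\<in>words. length t = L \<longrightarrow> q t = 0"
  shows "is_relation q \<Longrightarrow> height_le L q \<Longrightarrow> \<forall>t\<in>words. length t = L \<longrightarrow> (\<forall>m>D. q t $ m = 0) \<Longrightarrow>
    \<forall>t\<in>words. length t = L \<longrightarrow> q t = 0"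
proof (induction D arbitrary: q rule: less_induct)
  case (less D q)
  show ?case
  proof (cases "D = 0")
    case True
    then have "top_const L q"
      using less.prems(3) by (auto simp: top_const_def fps_eq_iff)
    then show ?thesis
      using const_case less.prems(1,2) by blast
  next
    case False
    have sections: "\<forall>t\<in>words. length t = L \<longrightarrow> section_coeffs j q t = 0" if "j < 3" for j
    proof (rule less.IH)
      show "D div 3 < D"
        using False by simp
      show "is_relation (section_coeffs j q)" and "height_le L (section_coeffs j q)"
        using less.prems(1,2) that
        by (simp_all add: is_relation_section_coeffs height_le_section_coeffs)
      show "\<forall>t\<in>words. length t = L \<longrightarrow> (\<forall>m > D div 3. section_coeffs j q t $ m = 0)"
        using less.prems(2,3) by (auto simp: section_coeffs_top)
    qed
    show ?thesis
    proof (intro ballI impI)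
      fix t assume t: "t \<in> words" "length t = L"
      show "q t = 0"
        by (rule fps_eq_0_if_sections_eq_0[of 3])
          (use sections t less.prems(2) in \<open>auto simp: section_coeffs_top\<close>)
    qed
  qed
qed

lemma relation_vanishes_if_height_le:
  fixes q :: "nat list \<Rightarrow> 'a::comm_ring_1 fps"
  shows "is_relation q \<Longrightarrow> height_le L q \<Longrightarrow> \<forall>t\<in>words. q t = 0"
proof (induction L arbitrary: q)
  case 0
  then show ?case
    by (rule relation_height_0)
next
  case (Suc L q)
  have "\<forall>\<^sub>F m in sequentially. \<forall>t\<in>words. q t $ m = 0"
    using Suc.prems(1) finite_words
    by (simp add: is_relation_def fps_is_poly_def eventually_ball_finite)
  then obtain D where "\<forall>m\<ge>D. \<forall>t\<in>words. q t $ m = 0"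
    by (auto simp: eventually_sequentially)
  then have "\<forall>t\<in>words. length t = Suc L \<longrightarrow> (\<forall>m>D. q t $ m = 0)"
    by simp
  then have top: "\<forall>t\<in>words. length t = Suc L \<longrightarrow> q t = 0"
    using top_coeffs_zero_by_degree[OF top_coeffs_zero_if_top_const[OF Suc.IH]] Suc.prems by blast
  have "height_le L q"
    unfolding height_le_def
  proof (intro ballI impI)
    fix t assume "t \<in> words" "L < length t"
    then show "q t = 0"
      using top Suc.prems(2) by (cases "length t = Suc L") (auto simp: height_le_def)
  qed
  then show ?case
    using Suc.IH Suc.prems(1) by blast
qed

theorem relation_vanishes:
  fixes q :: "nat list \<Rightarrow> 'a::comm_ring_1 fps"
  assumes "is_relation q"
  shows "\<forall>t\<in>words. q t = 0"
  using relation_vanishes_if_height_le[OF assms, of L0] by (auto simp: height_le_def words_def)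

lemma indexed_relation_vanishes:
  fixes Q :: "nat \<Rightarrow> 'a::comm_ring_1 fps" and a :: "nat \<Rightarrow> nat list"
  assumes I: "finite I" "inj_on a I" "a ` I \<subseteq> words - {[]}"
    and poly: "fps_is_poly Q0" "\<forall>i\<in>I. fps_is_poly (Q i)"
    and rel: "Q0 + (\<Sum>i\<in>I. Q i * Hgen (a i)) = 0"
  shows "Q0 = 0 \<and> (\<forall>i\<in>I. Q i = 0)"
proof -
  define q where
    "q t = (if t = [] then Q0 else if t \<in> a ` I then Q (the_inv_into I a t) else 0)" for t
  have q_a: "q (a i) = Q i" if "i \<in> I" for i
    using I that by (auto simp: q_def the_inv_into_f_f)
  have "combination q = (\<Sum>t\<in>insert [] (a ` I). q t * Hgen t)"
    unfolding combination_def using I finite_words Nil_in_words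
    by (intro sum.mono_neutral_right) (auto simp: q_def)
  also have "\<dots> = q [] * Hgen [] + (\<Sum>t\<in>a ` I. q t * Hgen t)"
    using I by (subst sum.insert) auto
  also have "\<dots> = Q0 + (\<Sum>i\<in>I. Q i * Hgen (a i))"
    using I by (simp add: q_def[of "[]"] Hgen_Nil sum.reindex q_a)
  finally have "is_relation q"
    using rel poly by (auto simp: is_relation_def q_def the_inv_into_into[OF I(2)])
  then have "\<forall>t\<in>words. q t = 0"
    by (rule relation_vanishes)
  then show ?thesis
    using I Nil_in_words by (auto simp: q_def[of "[]"] q_a[symmetric])
qed

end

lemma Hgen_independent:
  fixes Q :: "nat \<Rightarrow> 'a::comm_ring_1 fps" and a :: "nat \<Rightarrow> nat list"
  assumes adm: "\<forall>i\<in>{1..N}. admissible (a i)" and inj: "inj_on a {1..N}"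
    and poly: "\<forall>i\<in>{0..N}. fps_is_poly (Q i)"
    and rel: "Q 0 + (\<Sum>i=1..N. Q i * Hgen (a i)) = 0"
  shows "\<forall>i\<in>{0..N}. Q i = 0"
proof -
  define A where "A = (\<Union>i\<in>{1..N}. set (a i))"
  define L0 where "L0 = (\<Sum>i=1..N. length (a i))"
  interpret admissible_alphabet A L0
    using adm by unfold_locales (auto simp: A_def admissible_def)
  have "a i \<in> words - {[]}" if "i \<in> {1..N}" for i
  proof -
    have "set (a i) \<subseteq> A"
      using that by (auto simp: A_def)
    moreover have "length (a i) \<le> L0"
      unfolding L0_def using that by (intro member_le_sum) auto
    ultimately show ?thesis
      using adm that by (simp add: words_def admissible_def)
  qed
  then have "Q 0 = 0 \<and> (\<forall>i\<in>{1..N}. Q i = 0)"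
    using inj poly rel by (intro indexed_relation_vanishes) auto
  then show ?thesis
    by (metis atLeastAtMost_iff less_one not_le)
qed

definition fps_of_int :: "int fps \<Rightarrow> 'a::comm_ring_1 fps" where
  "fps_of_int f = Abs_fps (\<lambda>m. of_int (f $ m))"

lemma fps_of_int_nth [simp]: "fps_of_int f $ m = of_int (f $ m)"
  by (simp add: fps_of_int_def)

lemma fps_of_int_add: "fps_of_int (f + g) = fps_of_int f + fps_of_int g"
  by (simp add: fps_eq_iff)

lemma fps_of_int_mult: "fps_of_int (f * g) = fps_of_int f * fps_of_int g"
  by (simp add: fps_eq_iff fps_mult_nth)

lemma fps_of_int_sum: "fps_of_int (\<Sum>i\<in>S. f i) = (\<Sum>i\<in>S. fps_of_int (f i))"
  by (simp add: fps_eq_iff fps_sum_nth)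

lemma fps_of_int_H: "fps_of_int (H t) = Hgen t"
  by (simp add: fps_eq_iff H_def Hgen_def)

lemma fps_is_poly_fps_of_int: "fps_is_poly f \<Longrightarrow> fps_is_poly (fps_of_int f)"
  unfolding fps_is_poly_def by (erule eventually_mono) simp

definition H_combination :: "nat \<Rightarrow> (nat \<Rightarrow> nat list) \<Rightarrow> (nat \<Rightarrow> int poly) \<Rightarrow> int fps" where
  "H_combination N a p = fps_of_poly (p 0) + (\<Sum>i=1..N. fps_of_poly (p i) * H (a i))"

lemma H_combination_mod_3:
  assumes adm: "\<forall>i\<in>{1..N}. admissible (a i)" and inj: "inj_on a {1..N}"
    and div3: "\<forall>m. 3 dvd H_combination N a p $ m"
  shows "\<forall>i\<in>{0..N}. \<forall>k. 3 dvd coeff (p i) k"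
proof -
  let ?Q = "\<lambda>i. fps_of_int (fps_of_poly (p i)) :: 3 fps"
  have "fps_of_int (H_combination N a p) = (0 :: 3 fps)"
    using div3 by (simp add: fps_eq_iff of_int_eq_0_iff_char_dvd)
  then have "?Q 0 + (\<Sum>i=1..N. ?Q i * Hgen (a i)) = 0"
    by (simp add: H_combination_def fps_of_int_add fps_of_int_sum fps_of_int_mult fps_of_int_H)
  moreover have "fps_is_poly (?Q i)" for i
    by (intro fps_is_poly_fps_of_int fps_is_poly_fps_of_poly)
  ultimately have "\<forall>i\<in>{0..N}. ?Q i = 0"
    using Hgen_independent[OF adm inj, of ?Q] by blast
  then show ?thesis
    by (auto simp: fps_eq_iff of_int_eq_0_iff_char_dvd)
qed

lemma H_combination_smult:
  assumes "\<forall>i\<in>{0..N}. p i = smult c (p' i)"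
  shows "H_combination N a p = fps_const c * H_combination N a p'"
  using assms by (simp add: H_combination_def fps_of_poly_smult distrib_left sum_distrib_left
      mult.assoc)

lemma poly_eq_smult_div:
  fixes p :: "int poly"
  assumes "\<forall>k. c dvd coeff p k"
  shows "p = smult c (map_poly (\<lambda>x. x div c) p)"
  using assms by (intro poly_eqI) (simp add: coeff_map_poly)

lemma H_combination_mod_power_3:
  assumes adm: "\<forall>i\<in>{1..N}. admissible (a i)" and inj: "inj_on a {1..N}"
  shows "1 \<le> \<gamma> \<Longrightarrow> \<forall>m. 3 ^ \<gamma> dvd H_combination N a p $ m \<Longrightarrow>
    \<forall>i\<in>{0..N}. \<forall>k. 3 ^ \<gamma> dvd coeff (p i) k"
proof (induction \<gamma> arbitrary: p rule: dec_induct)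
  case base
  then show ?case
    using H_combination_mod_3[OF adm inj] by simp
next
  case (step g p)
  then have "\<forall>m. 3 dvd H_combination N a p $ m"
    using dvd_trans[of "3::int" "3 ^ Suc g"] by auto
  then have "\<forall>i\<in>{0..N}. \<forall>k. 3 dvd coeff (p i) k"
    using H_combination_mod_3[OF adm inj] by blast
  then have p': "\<forall>i\<in>{0..N}. p i = smult 3 (map_poly (\<lambda>x. x div 3) (p i))"
    using poly_eq_smult_div by blast
  let ?p' = "\<lambda>i. map_poly (\<lambda>x. x div 3) (p i)"
  have "3 ^ g dvd H_combination N a ?p' $ m" for m
    using step.prems[rule_format, of m] by (simp add: H_combination_smult[OF p'])
  then have "\<forall>i\<in>{0..N}. \<forall>k. 3 ^ g dvd coeff (?p' i) k"
    using step.IH[of ?p'] by blast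
  then show ?case
    using p' by (metis coeff_smult mult_dvd_mono dvd_refl power_Suc)
qed

lemma H_combination_eq_0:
  assumes adm: "\<forall>i\<in>{1..N}. admissible (a i)" and inj: "inj_on a {1..N}"
    and "H_combination N a p = 0"
  shows "\<forall>i\<in>{0..N}. p i = 0"
proof -
  have "fps_of_poly (p 0) + (\<Sum>i=1..N. fps_of_poly (p i) * Hgen (a i)) = 0"
    using assms(3) by (simp add: H_combination_def H_eq_Hgen)
  then have "\<forall>i\<in>{0..N}. fps_of_poly (p i) = 0"
    using Hgen_independent[OF adm inj, of "\<lambda>i. fps_of_poly (p i)"] fps_is_poly_fps_of_poly by blast
  then show ?thesis
    by simp
qed

theorem corollary2p3:
  fixes N :: nat and a :: "nat \<Rightarrow> nat list" and p :: "nat \<Rightarrow> int poly"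
  assumes adm: "\<forall>i\<in>{1..N}. admissible (a i)"
    and dist: "inj_on a {1..N}"
  shows "(\<forall>\<gamma>::nat. \<gamma> \<ge> 1 \<longrightarrow>
            (\<forall>m. (3::int) ^ \<gamma> dvd
                 fps_nth (fps_of_poly (p 0) + (\<Sum>i=1..N. fps_of_poly (p i) * H (a i))) m)
            \<longrightarrow> (\<forall>i\<in>{0..N}. \<forall>k. (3::int) ^ \<gamma> dvd coeff (p i) k))
       \<and> (fps_of_poly (p 0) + (\<Sum>i=1..N. fps_of_poly (p i) * H (a i)) = 0
            \<longrightarrow> (\<forall>i\<in>{0..N}. p i = 0))"
  using H_combination_mod_power_3[OF adm dist] H_combination_eq_0[OF adm dist]
  unfolding H_combination_def by blast

end
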